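(* Suppose $\rho=(\rho_i)_{i=1}^I \in C(\mathbb{R}_+,\mathbb{R}_+)^I$, and let $\psi_i(u):=\int_0^u \rho_i(u')du'$. Then $\rho \in \mathcal{D}_{\mathrm{density}}$ if and only if $\psi \in \mathcal{D}^2$.
   Context: Fix $I\in\mathbb{N}$. $\mathcal{C}=\{f\in C(\mathbb{R}_+,\mathbb{R}_+):f(0)=0,f\text{ non-decreasing}\}$, $\mathcal{C}^\uparrow=\{f\in\mathcal{C}:f\text{ strictly increasing},\lim_{u\to\infty}f(u)=\infty\}$, $\mathcal{C}^q=\{f\in\mathcal{C}:f^{\mathbb{R}}\in C^q(\mathbb{R},\mathbb{R})\}$ where $f^{\mathbb{R}}$ extends $f$ by $0$ on $(-\infty,0)$. For $\psi\in\mathcal{C}^I$, $\phi_i(u)=u-\sum_{j=1}^I2(i\wedge j)\psi_j(u)$. $\mathcal{D}=\{\psi\in\mathcal{C}^I:\phi_I\in\mathcal{C}^\uparrow,\sum_ii\sup_{u_1\neq u_2}\frac{\psi_i(u_1)-\psi_i(u_2)}{\phi_i(u_1)-\phi_i(u_2)}<\frac12\}$, $\mathcal{D}^2=\mathcal{D}\cap(\mathcal{C}^2)^I$. $\mathcal{C}^1(\mathbb{R}_+,\mathbb{R}_+)$: functions $f:\mathbb{R}_+\to\mathbb{R}_+$ whose extension by $0$ on $(-\infty,0)$ is $C^1$ on $\mathbb{R}$. $\mathcal{D}_{\mathrm{density}}$: the set of $\rho\in\mathcal{C}^1(\mathbb{R}_+,\mathbb{R}_+)^I$ with $\sum_{i=1}^I2i\rho_i(u)<1$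 for all $u\ge0$ and $\sum_{i=1}^Ii\sup_u\frac{\rho_i(u)}{1-\sum_{j=1}^I2(i\wedge j)\rho_j(u)}<\frac12$. *)

theory Defs
  imports "HOL-Analysis.Analysis"
begin

definition ext0 :: "(real \<Rightarrow> real) \<Rightarrow> real \<Rightarrow> real" where
  "ext0 f = (\<lambda>x. if x < 0 then 0 else f x)"

fun Ck :: "nat \<Rightarrow> (real \<Rightarrow> real) \<Rightarrow> bool" where
  "Ck 0 f = continuous_on UNIV f"
| "Ck (Suc k) f = ((\<forall>x. f differentiable (at x)) \<and> Ck k (deriv f))"

definition in_C :: "(real \<Rightarrow> real) \<Rightarrow> bool" where
  "in_C f \<longleftrightarrow> continuous_on {0..} f \<and> (\<forall>u\<ge>0. f u \<ge> 0) \<and> f 0 = 0 \<and> mono_on {0..} f"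

definition in_C_up :: "(real \<Rightarrow> real) \<Rightarrow> bool" where
  "in_C_up f \<longleftrightarrow> in_C f \<and> strict_mono_on {0..} f \<and> filterlim f at_top at_top"

definition in_Cq :: "nat \<Rightarrow> (real \<Rightarrow> real) \<Rightarrow> bool" where
  "in_Cq q f \<longleftrightarrow> in_C f \<and> Ck q (ext0 f)"

definition phi :: "nat \<Rightarrow> (nat \<Rightarrow> real \<Rightarrow> real) \<Rightarrow> nat \<Rightarrow> real \<Rightarrow> real" where
  "phi I \<psi> i u = u - (\<Sum>j=1..I. 2 * real (min i j) * \<psi> j u)"

definition in_D :: "nat \<Rightarrow> (nat \<Rightarrow> real \<Rightarrow> real) \<Rightarrow> bool" where
  "in_D I \<psi> \<longleftrightarrow> (\<forall>i\<in>{1..I}. in_C (\<psi> i)) \<and> in_C_up (phi I \<psi> I) \<and>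
     (\<Sum>i=1..I. ereal (real i) *
        (SUP p\<in>{(u1,u2). u1 \<ge> 0 \<and> u2 \<ge> 0 \<and> u1 \<noteq> u2}.
           ereal ((\<psi> i (fst p) - \<psi> i (snd p)) / (phi I \<psi> i (fst p) - phi I \<psi> i (snd p)))))
     < ereal (1/2)"

definition in_D2 :: "nat \<Rightarrow> (nat \<Rightarrow> real \<Rightarrow> real) \<Rightarrow> bool" where
  "in_D2 I \<psi> \<longleftrightarrow> in_D I \<psi> \<and> (\<forall>i\<in>{1..I}. in_Cq 2 (\<psi> i))"

definition in_C1_plus :: "(real \<Rightarrow> real) \<Rightarrow> bool" where
  "in_C1_plus f \<longleftrightarrow> (\<forall>u\<ge>0. f u \<ge> 0) \<and> Ck 1 (ext0 f)"

definition in_D_density :: "nat \<Rightarrow> (nat \<Rightarrow> real \<Rightarrow> real) \<Rightarrow> bool" where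
  "in_D_density I \<rho> \<longleftrightarrow> (\<forall>i\<in>{1..I}. in_C1_plus (\<rho> i)) \<and>
     (\<forall>u\<ge>0. (\<Sum>i=1..I. 2 * real i * \<rho> i u) < 1) \<and>
     (\<Sum>i=1..I. ereal (real i) *
        (SUP u\<in>{0::real..}.
           ereal (\<rho> i u / (1 - (\<Sum>j=1..I. 2 * real (min i j) * \<rho> j u)))))
     < ereal (1/2)"

end

theory Submission
  imports Defs
begin

(* Write phi_i' = 1 - sum_j 2 (i min j) rho_j for the derivative of phi_i. Both conditions are
   equivalent to the existence of constants c_i >= 0 with sum_i i c_i < 1/2 and
   rho_i <= c_i phi_i' on R+. For D_density take c_i = sup rho_i / phi_i'. For D, the
   difference quotients of psi_i with respect to phi_i are bounded by c_i iff c_i phi_i - psi_i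
   is non-decreasing, i.e. iff its derivative c_i phi_i' - rho_i is nonnegative. Conversely,
   since phi_i' <= 1 such constants give rho_i <= c_i, hence phi_I' >= 1 - 2 sum_i i c_i > 0;
   this is the strict inequality required in D_density, and it makes phi_I grow at least
   linearly, and every phi_i strictly increasing because phi_i - phi_I is non-decreasing.
   The regularity conditions match because the extension by zero of psi_i is C^2 iff that of
   rho_i is C^1, either one forcing rho_i 0 = 0. *)

lemma sum_weighted_ereal_less_iff:
  fixes w :: "'a \<Rightarrow> real" and S :: "'a \<Rightarrow> ereal"
  assumes "finite A" and w_pos: "\<And>i. i \<in> A \<Longrightarrow> 0 < w i" and S_nonneg: "\<And>i. i \<in> A \<Longrightarrow> 0 \<le> S i"
  shows "(\<Sum>i\<in>A. ereal (w i) * S i) < ereal b \<longleftrightarrow>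
    (\<exists>c. (\<forall>i\<in>A. 0 \<le> c i \<and> S i \<le> ereal (c i)) \<and> (\<Sum>i\<in>A. w i * c i) < b)"
proof
  assume less: "(\<Sum>i\<in>A. ereal (w i) * S i) < ereal b"
  define c where "c i = real_of_ereal (S i)" for i
  have "S i \<noteq> \<infinity>" if "i \<in> A" for i
  proof
    assume "S i = \<infinity>"
    then have "ereal (w i) * S i = \<infinity>" using w_pos[OF that] by simp
    then have "(\<Sum>i\<in>A. ereal (w i) * S i) = \<infinity>"
      using sum_Pinfty \<open>finite A\<close> that by blast
    with less show False by simp
  qed
  then have S_eq: "S i = ereal (c i)" if "i \<in> A" for i
    using S_nonneg[OF that] that unfolding c_def by (cases "S i") auto
  have "(\<Sum>i\<in>A. ereal (w i) * S i) = ereal (\<Sum>i\<in>A. w i * c i)"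
    by (simp add: S_eq)
  then have "(\<Sum>i\<in>A. w i * c i) < b" using less by simp
  moreover have "0 \<le> c i" if "i \<in> A" for i
    unfolding c_def using S_nonneg[OF that] by (simp add: real_of_ereal_pos)
  ultimately show "\<exists>c. (\<forall>i\<in>A. 0 \<le> c i \<and> S i \<le> ereal (c i)) \<and> (\<Sum>i\<in>A. w i * c i) < b"
    using S_eq by auto
next
  assume "\<exists>c. (\<forall>i\<in>A. 0 \<le> c i \<and> S i \<le> ereal (c i)) \<and> (\<Sum>i\<in>A. w i * c i) < b"
  then obtain c where c: "\<And>i. i \<in> A \<Longrightarrow> S i \<le> ereal (c i)" and less: "(\<Sum>i\<in>A. w i * c i) < b"
    by blast
  have "(\<Sum>i\<in>A. ereal (w i) * S i) \<le> (\<Sum>i\<in>A. ereal (w i) * ereal (c i))"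
    using c w_pos by (intro sum_mono ereal_mult_left_mono) (auto simp: less_imp_le)
  also have "\<dots> = ereal (\<Sum>i\<in>A. w i * c i)" by simp
  also have "\<dots> < ereal b" using less by simp
  finally show "(\<Sum>i\<in>A. ereal (w i) * S i) < ereal b" .
qed

lemma mono_on_has_real_derivative_nonneg:
  fixes f :: "real \<Rightarrow> real"
  assumes mono: "mono_on S f" and deriv: "(f has_real_derivative D) (at x within S)"
    and "x \<in> S" and "x islimpt S"
  shows "0 \<le> D"
proof (rule tendsto_lowerbound)
  show "((\<lambda>y. (f y - f x) / (y - x)) \<longlongrightarrow> D) (at x within S)"
    using deriv by (simp add: has_field_derivative_iff)
  have "0 \<le> (f y - f x) / (y - x)" if "y \<in> S" "y \<noteq> x" for y
    using mono_onD[OF mono \<open>x \<in> S\<close> \<open>y \<in> S\<close>] mono_onD[OF mono \<open>y \<in> S\<close> \<open>x \<in> S\<close>] that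
    by (cases "x < y") (auto intro: divide_nonneg_pos divide_nonpos_neg)
  then show "\<forall>\<^sub>F y in at x within S. 0 \<le> (f y - f x) / (y - x)"
    by (auto simp: eventually_at_filter)
  show "at x within S \<noteq> bot"
    using \<open>x islimpt S\<close> trivial_limit_within by blast
qed

lemma mono_on_atLeast_iff_deriv_nonneg:
  fixes f f' :: "real \<Rightarrow> real"
  assumes deriv: "\<And>x. a \<le> x \<Longrightarrow> (f has_real_derivative f' x) (at x within {a..})"
  shows "mono_on {a..} f \<longleftrightarrow> (\<forall>x\<ge>a. 0 \<le> f' x)"
proof
  assume "mono_on {a..} f"
  moreover have "x islimpt {a..}" if "a \<le> x" for x
    using islimpt_Icc[of x "x + 1"] islimpt_subset[of x "{x..x+1}" "{a..}"] that by auto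
  ultimately show "\<forall>x\<ge>a. 0 \<le> f' x"
    using deriv mono_on_has_real_derivative_nonneg by blast
next
  assume nonneg: "\<forall>x\<ge>a. 0 \<le> f' x"
  have cont: "continuous_on {a..} f"
    using deriv by (auto intro: DERIV_continuous_on)
  show "mono_on {a..} f"
  proof (rule mono_onI)
    fix x y assume x: "x \<in> {a..}" and "y \<in> {a..}" "x \<le> y"
    show "f x \<le> f y"
    proof (rule DERIV_nonneg_imp_increasing_open[OF \<open>x \<le> y\<close>])
      fix z assume "x < z" "z < y"
      with x have "at z within {a..} = at z" and "a \<le> z"
        by (auto intro: at_within_interior simp: interior_Ici)
      then show "\<exists>D. (f has_real_derivative D) (at z) \<and> 0 \<le> D"
        using deriv nonneg by metis
    qed (use x in \<open>auto intro: continuous_on_subset[OF cont]\<close>)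
  qed
qed

lemma diff_quotient_le_iff_mono_on:
  fixes P Q :: "real \<Rightarrow> real"
  assumes "strict_mono_on S P"
  shows "(\<forall>x\<in>S. \<forall>y\<in>S. x \<noteq> y \<longrightarrow> (Q x - Q y) / (P x - P y) \<le> c) \<longleftrightarrow>
    mono_on S (\<lambda>u. c * P u - Q u)"
proof -
  have ordered: "(Q y - Q x) / (P y - P x) \<le> c \<longleftrightarrow> c * P x - Q x \<le> c * P y - Q y"
    if "x \<in> S" "y \<in> S" "x < y" for x y
    using strict_mono_onD[OF assms that] by (simp add: pos_divide_le_eq algebra_simps)
  have swap: "(Q x - Q y) / (P x - P y) = (Q y - Q x) / (P y - P x)" for x y
    by (metis minus_diff_eq minus_divide_divide)
  show ?thesis
    unfolding mono_on_def monotone_on_def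
    by (metis ordered swap order_le_less order_refl linorder_neqE)
qed

lemma integral_has_real_derivative_atLeast:
  assumes "continuous_on {a..} g" and "a \<le> x"
  shows "((\<lambda>u. integral {a..u} g) has_real_derivative g x) (at x within {a..})"
proof -
  have "((\<lambda>u. integral {a..u} g) has_real_derivative g x) (at x within {a..x+1})"
    by (rule integral_has_real_derivative) (use assms in \<open>auto intro: continuous_on_subset\<close>)
  moreover have "at x within {a..x+1} = at x within {a..}"
    by (rule at_within_nhd[where S="{x-1<..<x+1}"]) auto
  ultimately show ?thesis by simp
qed

lemma continuous_on_ext0:
  assumes "continuous_on {0..} g" and "g 0 = 0"
  shows "continuous_on UNIV (ext0 g)"
proof -
  have "continuous_on UNIV (\<lambda>x. if x \<le> (0::real) then 0 else g x)"
    by (rule continuous_on_cases_le[where h=id, simplified]) (use assms in \<open>auto simp: atLeast_def\<close>)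
  moreover have "ext0 g = (\<lambda>x. if x \<le> 0 then 0 else g x)"
    using assms(2) by (auto simp: ext0_def fun_eq_iff)
  ultimately show ?thesis by simp
qed

lemma ext0_integral_has_real_derivative:
  assumes g: "continuous_on {0..} g" and "g 0 = 0"
  shows "(ext0 (\<lambda>u. integral {0..u} g) has_real_derivative ext0 g x) (at x)"
proof -
  define a where "a = min x 0 - 1"
  have cont: "continuous_on UNIV (ext0 g)" by (rule continuous_on_ext0[OF assms])
  have "((\<lambda>y. integral {a..y} (ext0 g)) has_real_derivative ext0 g x) (at x within {a..x+1})"
    by (rule integral_has_real_derivative) (auto simp: a_def intro: continuous_on_subset[OF cont])
  moreover have "at x within {a..x+1} = at x" by (rule at_within_Icc_at) (auto simp: a_def)
  ultimately have deriv: "((\<lambda>y. integral {a..y} (ext0 g)) has_real_derivative ext0 g x) (at x)"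
    by simp
  show ?thesis
  proof (rule has_field_derivative_transform_within_open[OF deriv, of "{a<..}"])
    fix y assume "y \<in> {a<..}"
    show "integral {a..y} (ext0 g) = ext0 (\<lambda>u. integral {0..u} g) y"
    proof (cases "y < 0")
      case True
      then have "integral {a..y} (ext0 g) = integral {a..y} (\<lambda>_. 0)"
        by (intro integral_cong) (auto simp: ext0_def)
      then show ?thesis using True by (simp add: ext0_def)
    next
      case False
      have "integral {a..y} (ext0 g) = integral {a..0} (ext0 g) + integral {0..y} (ext0 g)"
        using False by (intro Henstock_Kurzweil_Integration.integral_combine[symmetric]
            integrable_continuous_interval continuous_on_subset[OF cont]) (auto simp: a_def)
      also have "integral {a..0} (ext0 g) = integral {a..0} (\<lambda>_. 0)"
        using \<open>g 0 = 0\<close> by (intro integral_cong) (auto simp: ext0_def)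
      also have "integral {0..y} (ext0 g) = integral {0..y} g"
        by (intro integral_cong) (auto simp: ext0_def)
      finally show ?thesis using False by (simp add: ext0_def)
    qed
  qed (auto simp: a_def)
qed

lemma ext0_integral_differentiable_at_0D:
  assumes g: "continuous_on {0..} g"
    and "ext0 (\<lambda>u. integral {0..u} g) differentiable (at 0)"
  shows "g 0 = 0"
proof -
  let ?E = "ext0 (\<lambda>u. integral {0..u} g)"
  obtain D where D: "(?E has_real_derivative D) (at 0)"
    using assms(2) real_differentiable_def by blast
  have "((\<lambda>u. integral {0..u} g) has_real_derivative g 0) (at 0 within {0..})"
    by (rule integral_has_real_derivative_atLeast[OF g]) simp
  then have "(?E has_real_derivative g 0) (at 0 within {0..})"
    by (rule has_field_derivative_transform_within[where d=1]) (auto simp: ext0_def)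
  moreover have "(?E has_real_derivative D) (at 0 within {0..})"
    using D by (rule has_field_derivative_at_within)
  ultimately have "D = g 0"
    by (intro has_field_derivative_unique) (auto simp: at_within_Ici_at_right)
  have "((\<lambda>_. 0) has_real_derivative 0) (at 0 within {..0})" by simp
  then have "(?E has_real_derivative 0) (at 0 within {..0})"
    by (rule has_field_derivative_transform_within[where d=1]) (auto simp: ext0_def)
  moreover have "(?E has_real_derivative D) (at 0 within {..0})"
    using D by (rule has_field_derivative_at_within)
  ultimately have "D = 0"
    by (intro has_field_derivative_unique) (auto simp: at_within_Iic_at_left)
  with \<open>D = g 0\<close> show ?thesis by simp
qed

lemma isCont_ext0_0D:
  assumes "isCont (ext0 g) 0"
  shows "g 0 = 0"
proof -
  have "(ext0 g \<longlongrightarrow> ext0 g 0) (at_left 0)"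
    using assms filterlim_at_split unfolding isCont_def by blast
  moreover have "\<forall>\<^sub>F x in at_left (0::real). ext0 g x = 0"
    using eventually_at_left_real[of "-1" 0] by (rule eventually_mono) (auto simp: ext0_def)
  then have "(ext0 g \<longlongrightarrow> 0) (at_left 0)"
    by (rule tendsto_eventually)
  ultimately have "ext0 g 0 = 0"
    using tendsto_unique[OF trivial_limit_at_left_real] by blast
  then show ?thesis by (simp add: ext0_def)
qed

lemma Ck_2: "Ck 2 f \<longleftrightarrow> (\<forall>x. f differentiable (at x)) \<and> Ck 1 (deriv f)"
  by (simp add: numeral_2_eq_2)

lemma Ck_2_ext0_integral_iff:
  assumes g: "continuous_on {0..} g"
  shows "Ck 2 (ext0 (\<lambda>u. integral {0..u} g)) \<longleftrightarrow> Ck 1 (ext0 g)"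
proof
  assume C2: "Ck 2 (ext0 (\<lambda>u. integral {0..u} g))"
  then have "g 0 = 0" using ext0_integral_differentiable_at_0D[OF g] by (simp add: Ck_2)
  then have "deriv (ext0 (\<lambda>u. integral {0..u} g)) = ext0 g"
    using ext0_integral_has_real_derivative[OF g] DERIV_imp_deriv by blast
  then show "Ck 1 (ext0 g)" using C2 by (simp add: Ck_2)
next
  assume C1: "Ck 1 (ext0 g)"
  then have "isCont (ext0 g) 0" by (simp add: differentiable_imp_continuous_within)
  then have "g 0 = 0" by (rule isCont_ext0_0D)
  then have deriv: "(ext0 (\<lambda>u. integral {0..u} g) has_real_derivative ext0 g x) (at x)" for x
    using ext0_integral_has_real_derivative[OF g] by blast
  then have "deriv (ext0 (\<lambda>u. integral {0..u} g)) = ext0 g"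
    using DERIV_imp_deriv by blast
  then show "Ck 2 (ext0 (\<lambda>u. integral {0..u} g))"
    using C1 deriv real_differentiable_def by (auto simp: Ck_2)
qed

locale density_setup =
  fixes I :: nat and \<rho> :: "nat \<Rightarrow> real \<Rightarrow> real"
  assumes continuous_rho: "i \<in> {1..I} \<Longrightarrow> continuous_on {0..} (\<rho> i)"
    and rho_nonneg: "i \<in> {1..I} \<Longrightarrow> 0 \<le> u \<Longrightarrow> 0 \<le> \<rho> i u"
begin

definition psi :: "nat \<Rightarrow> real \<Rightarrow> real" where
  "psi i u = integral {0..u} (\<rho> i)"

definition dphi :: "nat \<Rightarrow> real \<Rightarrow> real" where
  "dphi i u = 1 - (\<Sum>j=1..I. 2 * real (min i j) * \<rho> j u)"

definition sup_rho_ratio :: "nat \<Rightarrow> ereal" where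
  "sup_rho_ratio i = (SUP u\<in>{0::real..}. ereal (\<rho> i u / dphi i u))"

definition sup_psi_quotient :: "nat \<Rightarrow> ereal" where
  "sup_psi_quotient i = (SUP p\<in>{(u1,u2). u1 \<ge> 0 \<and> u2 \<ge> 0 \<and> u1 \<noteq> u2}.
     ereal ((psi i (fst p) - psi i (snd p)) / (phi I psi i (fst p) - phi I psi i (snd p))))"

definition density_bound :: "(nat \<Rightarrow> real) \<Rightarrow> bool" where
  "density_bound c \<longleftrightarrow> (\<forall>i\<in>{1..I}. 0 \<le> c i \<and> (\<forall>u\<ge>0. \<rho> i u \<le> c i * dphi i u)) \<and>
     (\<Sum>i=1..I. real i * c i) < 1/2"

lemma psi_has_derivative:
  "i \<in> {1..I} \<Longrightarrow> 0 \<le> u \<Longrightarrow> (psi i has_real_derivative \<rho> i u) (at u within {0..})"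
  unfolding psi_def[abs_def] by (rule integral_has_real_derivative_atLeast[OF continuous_rho])

lemma phi_has_derivative:
  assumes "0 \<le> u"
  shows "(phi I psi i has_real_derivative dphi i u) (at u within {0..})"
proof -
  have "phi I psi i = (\<lambda>u. u - (\<Sum>j=1..I. 2 * real (min i j) * psi j u))"
    by (simp add: phi_def fun_eq_iff)
  then show ?thesis
    unfolding dphi_def using assms
    by (auto intro!: DERIV_diff DERIV_ident DERIV_sum DERIV_cmult psi_has_derivative)
qed

lemma psi_in_C:
  assumes "i \<in> {1..I}"
  shows "in_C (psi i)"
proof -
  have "mono_on {0..} (psi i)"
    using psi_has_derivative[OF assms] rho_nonneg[OF assms]
    by (subst mono_on_atLeast_iff_deriv_nonneg) auto
  moreover have "continuous_on {0..} (psi i)"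
    using psi_has_derivative[OF assms] by (auto intro: DERIV_continuous_on)
  moreover have "psi i 0 = 0" by (simp add: psi_def)
  ultimately show ?thesis
    unfolding in_C_def by (metis atLeast_iff mono_onD order_refl)
qed

lemma dphi_le_one: "0 \<le> u \<Longrightarrow> dphi i u \<le> 1"
  unfolding dphi_def by (auto intro!: sum_nonneg mult_nonneg_nonneg rho_nonneg)

lemma dphi_antimono: "i \<le> k \<Longrightarrow> 0 \<le> u \<Longrightarrow> dphi k u \<le> dphi i u"
  unfolding dphi_def by (auto intro!: sum_mono mult_right_mono rho_nonneg)

lemma dphi_I: "dphi I u = 1 - (\<Sum>j=1..I. 2 * real j * \<rho> j u)"
  unfolding dphi_def by (intro arg_cong[where f="\<lambda>x. 1 - x"] sum.cong) auto

lemma density_bound_dphi_lower: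
  assumes "density_bound c" and "0 \<le> u"
  shows "1 - 2 * (\<Sum>i=1..I. real i * c i) \<le> dphi I u"
proof -
  have "\<rho> i u \<le> c i" if "i \<in> {1..I}" for i
    using assms dphi_le_one[of u i] that unfolding density_bound_def
    by (metis mult_left_le order_trans)
  then have "(\<Sum>i=1..I. 2 * real i * \<rho> i u) \<le> (\<Sum>i=1..I. 2 * (real i * c i))"
    by (intro sum_mono) auto
  then show ?thesis unfolding dphi_I by (simp add: sum_distrib_left)
qed

lemma density_bound_dphi_pos:
  assumes "density_bound c" and "0 \<le> u" and "i \<le> I"
  shows "0 < dphi i u"
  using density_bound_dphi_lower[OF assms(1,2)] dphi_antimono[OF assms(3,2)] assms(1)
  unfolding density_bound_def by linarith

lemma sup_rho_ratio:
  assumes "i \<in> {1..I}" and "\<forall>u\<ge>0. 0 < dphi i u"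
  shows sup_rho_ratio_nonneg: "0 \<le> sup_rho_ratio i"
    and sup_rho_ratio_le_iff: "sup_rho_ratio i \<le> ereal c \<longleftrightarrow> (\<forall>u\<ge>0. \<rho> i u \<le> c * dphi i u)"
proof -
  have "ereal 0 \<le> ereal (\<rho> i 0 / dphi i 0)"
    using rho_nonneg[OF assms(1), of 0] assms(2) by (simp add: divide_nonneg_pos)
  also have "\<dots> \<le> sup_rho_ratio i"
    unfolding sup_rho_ratio_def by (rule SUP_upper) simp
  finally show "0 \<le> sup_rho_ratio i" by (simp add: zero_ereal_def)
  show "sup_rho_ratio i \<le> ereal c \<longleftrightarrow> (\<forall>u\<ge>0. \<rho> i u \<le> c * dphi i u)"
    using assms(2) by (simp add: sup_rho_ratio_def SUP_le_iff pos_divide_le_eq mult.commute atLeast_def)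
qed

lemma in_D_density_iff:
  "in_D_density I \<rho> \<longleftrightarrow> (\<forall>i\<in>{1..I}. in_C1_plus (\<rho> i)) \<and> (\<exists>c. density_bound c)"
proof -
  have "(\<forall>u\<ge>0. (\<Sum>i=1..I. 2 * real i * \<rho> i u) < 1) \<and>
      (\<Sum>i=1..I. ereal (real i) * sup_rho_ratio i) < ereal (1/2) \<longleftrightarrow> (\<exists>c. density_bound c)"
  proof
    assume asm: "(\<forall>u\<ge>0. (\<Sum>i=1..I. 2 * real i * \<rho> i u) < 1) \<and>
      (\<Sum>i=1..I. ereal (real i) * sup_rho_ratio i) < ereal (1/2)"
    then have pos: "\<forall>u\<ge>0. 0 < dphi i u" if "i \<in> {1..I}" for i
      using dphi_antimono[of i I] that by (force simp: dphi_I)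
    have "\<exists>c. (\<forall>i\<in>{1..I}. 0 \<le> c i \<and> sup_rho_ratio i \<le> ereal (c i)) \<and> (\<Sum>i=1..I. real i * c i) < 1/2"
      using asm pos sup_rho_ratio_nonneg by (subst sum_weighted_ereal_less_iff[symmetric]) auto
    then show "\<exists>c. density_bound c"
      using pos sup_rho_ratio_le_iff unfolding density_bound_def by auto
  next
    assume "\<exists>c. density_bound c"
    then obtain c where c: "density_bound c" ..
    then have pos: "\<forall>u\<ge>0. 0 < dphi i u" if "i \<le> I" for i
      using density_bound_dphi_pos that by blast
    have "\<forall>u\<ge>0. (\<Sum>i=1..I. 2 * real i * \<rho> i u) < 1"
      using pos[of I] by (simp add: dphi_I)
    moreover have "(\<Sum>i=1..I. ereal (real i) * sup_rho_ratio i) < ereal (1/2)"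
      using c pos sup_rho_ratio_nonneg sup_rho_ratio_le_iff
      unfolding density_bound_def by (subst sum_weighted_ereal_less_iff) auto
    ultimately show "(\<forall>u\<ge>0. (\<Sum>i=1..I. 2 * real i * \<rho> i u) < 1) \<and>
      (\<Sum>i=1..I. ereal (real i) * sup_rho_ratio i) < ereal (1/2)" ..
  qed
  then show ?thesis
    unfolding in_D_density_def dphi_def[symmetric] sup_rho_ratio_def[symmetric] by blast
qed

lemma phi_0: "phi I psi i 0 = 0"
  by (simp add: phi_def psi_def)

lemma phi_strict_mono_on:
  assumes "strict_mono_on {0..} (phi I psi I)" and "i \<le> I"
  shows "strict_mono_on {0..} (phi I psi i)"
proof (rule strict_mono_onI)
  have mono: "mono_on {0..} (\<lambda>u. phi I psi i u - phi I psi I u)"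
    using dphi_antimono[OF assms(2)]
    by (subst mono_on_atLeast_iff_deriv_nonneg) (auto intro: DERIV_diff phi_has_derivative)
  fix x y :: real assume xy: "x \<in> {0..}" "y \<in> {0..}" "x < y"
  have "phi I psi i x - phi I psi I x \<le> phi I psi i y - phi I psi I y"
    using mono_onD[OF mono xy(1,2)] xy(3) by simp
  moreover have "phi I psi I x < phi I psi I y"
    using strict_mono_onD[OF assms(1) xy] .
  ultimately show "phi I psi i x < phi I psi i y" by linarith
qed

lemma sup_psi_quotient:
  assumes "i \<in> {1..I}" and phi_mono: "strict_mono_on {0..} (phi I psi i)"
  shows sup_psi_quotient_nonneg: "0 \<le> sup_psi_quotient i"
    and sup_psi_quotient_le_iff: "sup_psi_quotient i \<le> ereal c \<longleftrightarrow> (\<forall>u\<ge>0. \<rho> i u \<le> c * dphi i u)"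
proof -
  have "psi i 0 \<le> psi i 1"
    using psi_in_C[OF assms(1)] unfolding in_C_def by (simp add: mono_onD)
  moreover have "phi I psi i 0 < phi I psi i 1"
    using strict_mono_onD[OF phi_mono, of 0 1] by simp
  ultimately have "ereal 0 \<le> ereal ((psi i 1 - psi i 0) / (phi I psi i 1 - phi I psi i 0))"
    by simp
  also have "\<dots> \<le> sup_psi_quotient i"
    unfolding sup_psi_quotient_def by (rule SUP_upper2[where i="(1, 0)"]) auto
  finally show "0 \<le> sup_psi_quotient i" by (simp add: zero_ereal_def)
  have "sup_psi_quotient i \<le> ereal c \<longleftrightarrow>
      (\<forall>x\<in>{0..}. \<forall>y\<in>{0..}. x \<noteq> y \<longrightarrow> (psi i x - psi i y) / (phi I psi i x - phi I psi i y) \<le> c)"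
    by (auto simp: sup_psi_quotient_def SUP_le_iff)
  also have "\<dots> \<longleftrightarrow> mono_on {0..} (\<lambda>u. c * phi I psi i u - psi i u)"
    by (rule diff_quotient_le_iff_mono_on[OF phi_mono])
  also have "\<dots> \<longleftrightarrow> (\<forall>u\<ge>0. 0 \<le> c * dphi i u - \<rho> i u)"
    by (rule mono_on_atLeast_iff_deriv_nonneg)
       (auto intro!: DERIV_diff DERIV_cmult phi_has_derivative psi_has_derivative assms(1))
  finally show "sup_psi_quotient i \<le> ereal c \<longleftrightarrow> (\<forall>u\<ge>0. \<rho> i u \<le> c * dphi i u)"
    by simp
qed

lemma density_bound_phi_in_C_up:
  assumes "density_bound c"
  shows "in_C_up (phi I psi I)"
proof -
  define \<delta> where "\<delta> = 1 - 2 * (\<Sum>i=1..I. real i * c i)"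
  have "0 < \<delta>" using assms unfolding density_bound_def \<delta>_def by simp
  have mono: "mono_on {0..} (\<lambda>u. phi I psi I u - \<delta> * u)"
    using density_bound_dphi_lower[OF assms] unfolding \<delta>_def[symmetric]
    by (subst mono_on_atLeast_iff_deriv_nonneg)
       (auto intro!: derivative_eq_intros phi_has_derivative)
  then have growth: "\<delta> * (y - x) \<le> phi I psi I y - phi I psi I x" if "0 \<le> x" "x \<le> y" for x y
    using mono_onD[OF mono, of x y] that by (simp add: algebra_simps)
  have strict: "strict_mono_on {0..} (phi I psi I)"
  proof (rule strict_mono_onI)
    fix x y :: real assume "x \<in> {0..}" "y \<in> {0..}" "x < y"
    then show "phi I psi I x < phi I psi I y"
      using growth[of x y] mult_pos_pos[OF \<open>0 < \<delta>\<close>, of "y - x"] by simp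
  qed
  have lower: "\<delta> * u \<le> phi I psi I u" if "0 \<le> u" for u
    using growth[OF order_refl that] phi_0 by simp
  have "filterlim (\<lambda>u. \<delta> * u) at_top at_top"
    using \<open>0 < \<delta>\<close> by (intro filterlim_tendsto_pos_mult_at_top[OF tendsto_const _ filterlim_ident])
  then have "filterlim (phi I psi I) at_top at_top"
    by (rule filterlim_at_top_mono) (use lower in \<open>auto intro: eventually_mono[OF eventually_ge_at_top[of 0]]\<close>)
  moreover have "continuous_on {0..} (phi I psi I)"
    by (auto intro: DERIV_continuous_on phi_has_derivative)
  moreover have "0 \<le> phi I psi I u" if "0 \<le> u" for u
    using lower[OF that] mult_nonneg_nonneg[of \<delta> u] \<open>0 < \<delta>\<close> that by linarith
  ultimately show ?thesis
    using strict phi_0 strict_mono_on_imp_mono_on unfolding in_C_up_def in_C_def by blast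
qed

lemma in_D_iff: "in_D I psi \<longleftrightarrow> (\<exists>c. density_bound c)"
proof
  assume D: "in_D I psi"
  then have mono: "strict_mono_on {0..} (phi I psi i)" if "i \<in> {1..I}" for i
    using phi_strict_mono_on that unfolding in_D_def in_C_up_def by auto
  moreover have "(\<Sum>i=1..I. ereal (real i) * sup_psi_quotient i) < ereal (1/2)"
    using D unfolding in_D_def sup_psi_quotient_def by blast
  ultimately have "\<exists>c. (\<forall>i\<in>{1..I}. 0 \<le> c i \<and> sup_psi_quotient i \<le> ereal (c i)) \<and>
      (\<Sum>i=1..I. real i * c i) < 1/2"
    using sup_psi_quotient_nonneg by (subst sum_weighted_ereal_less_iff[symmetric]) auto
  then show "\<exists>c. density_bound c"
    using mono sup_psi_quotient_le_iff unfolding density_bound_def by auto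
next
  assume "\<exists>c. density_bound c"
  then obtain c where c: "density_bound c" ..
  then have up: "in_C_up (phi I psi I)" by (rule density_bound_phi_in_C_up)
  then have mono: "strict_mono_on {0..} (phi I psi i)" if "i \<in> {1..I}" for i
    using phi_strict_mono_on that unfolding in_C_up_def by auto
  have "(\<Sum>i=1..I. ereal (real i) * sup_psi_quotient i) < ereal (1/2)"
    using c mono sup_psi_quotient_nonneg sup_psi_quotient_le_iff
    unfolding density_bound_def by (subst sum_weighted_ereal_less_iff) auto
  then show "in_D I psi"
    using psi_in_C up unfolding in_D_def sup_psi_quotient_def by blast
qed

lemma in_D2_iff:
  "in_D2 I psi \<longleftrightarrow> (\<forall>i\<in>{1..I}. in_C1_plus (\<rho> i)) \<and> (\<exists>c. density_bound c)"
proof -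
  have "in_Cq 2 (psi i) \<longleftrightarrow> in_C1_plus (\<rho> i)" if "i \<in> {1..I}" for i
    using psi_in_C[OF that] Ck_2_ext0_integral_iff[OF continuous_rho[OF that]] rho_nonneg[OF that]
    unfolding in_Cq_def in_C1_plus_def psi_def[abs_def] by auto
  then show ?thesis
    unfolding in_D2_def in_D_iff by auto
qed

end

theorem lemma6p5:
  fixes I :: nat and \<rho> :: "nat \<Rightarrow> real \<Rightarrow> real"
  assumes "\<forall>i\<in>{1..I}. continuous_on {0..} (\<rho> i) \<and> (\<forall>u\<ge>0. \<rho> i u \<ge> 0)"
  shows "in_D_density I \<rho> \<longleftrightarrow> in_D2 I (\<lambda>i u. integral {0..u} (\<rho> i))"
proof -
  interpret density_setup I \<rho>
    using assms by unfold_locales auto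
  show ?thesis
    using in_D_density_iff in_D2_iff unfolding psi_def[abs_def] by simp
qed

end
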